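(* Let $T=(V,E,w)$ be a tree with positive integer costs. For every decision tree $D$ for $T$ there is an extended strategy function $f$ for $T$ with $\sup\bigcup_{v\in V}f(v)=\mathrm{COST}(D)$, and for every extended strategy function $f$ for $T$ there is a decision tree $D$ for $T$ with $\mathrm{COST}(D)\le \sup\bigcup_{v\in V} f(v)$. Consequently $\mathrm{OPT}(T)=\min_f \sup\bigcup_{v\in V}f(v)$, the minimum over all extended strategy functions $f$ for $T$.
   Context: A decision tree for $T$ is defined recursively: if $|V|=1$ it consists of that single vertex; otherwise one chooses a vertex $q$, and the decision tree is the rooted tree with root $q$ whose children are the roots of decision trees for the connected components of $T-q$. $\mathrm{COST}(D)$ is the maximum over root-to-leaf paths $P$ of $D$ of $\sum_{v\in P}w(v)$, and $\mathrm{OPT}(T)$ is its minimum over decision trees. Intervals are of the form $[a,b)$ with integers $0\le a<b$, and $|[a,b)|=b-a$. For intervals $I=[a,b)$, $I'=[a',b')$ write $I>I'$ (equivalently $I'<I$) iff $a\ge b'$. An extended strategy function for $T$ is a map $f$ assigning to each vertex $v$ an interval $f(v)$ with $|f(v)|\ge w(v)$, such that for any distinct $v_1,v_2$ with $f(v_1)\cap f(v_2)\ne\emptyset$, the path between $v_1$ and $v_2$ contains a vertex $v_3$ with $f(v_3)>f(v_1)$ and $f(v_3)>f(v_2)$. *)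

theory Defs
  imports Main
begin

definition is_path :: "('a \<Rightarrow> 'a \<Rightarrow> bool) \<Rightarrow> 'a \<Rightarrow> 'a \<Rightarrow> 'a list \<Rightarrow> bool" where
  "is_path E u v p \<longleftrightarrow> p \<noteq> [] \<and> hd p = u \<and> last p = v \<and> distinct p \<and>
     (\<forall>i. Suc i < length p \<longrightarrow> E (p ! i) (p ! Suc i))"

definition is_tree :: "'a set \<Rightarrow> ('a \<Rightarrow> 'a \<Rightarrow> bool) \<Rightarrow> bool" where
  "is_tree V E \<longleftrightarrow> finite V \<and> V \<noteq> {} \<and>
     (\<forall>a b. E a b \<longrightarrow> a \<in> V \<and> b \<in> V) \<and>
     (\<forall>a b. E a b \<longrightarrow> E b a) \<and> (\<forall>a. \<not> E a a) \<and>
     (\<forall>u\<in>V. \<forall>v\<in>V. \<exists>!p. is_path E u v p)"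

definition comps :: "('a \<Rightarrow> 'a \<Rightarrow> bool) \<Rightarrow> 'a set \<Rightarrow> 'a set set" where
  "comps E U = {C. \<exists>x\<in>U. C = {y\<in>U. (\<lambda>a b. E a b \<and> a \<in> U \<and> b \<in> U)\<^sup>*\<^sup>* x y}}"

datatype 'a dtree = DNode 'a "'a dtree list"

fun dverts :: "'a dtree \<Rightarrow> 'a set" where
  "dverts (DNode q Ds) = insert q (\<Union>D\<in>set Ds. dverts D)"

inductive is_dtree :: "('a \<Rightarrow> 'a \<Rightarrow> bool) \<Rightarrow> 'a set \<Rightarrow> 'a dtree \<Rightarrow> bool" for E where
  "q \<in> U \<Longrightarrow> (\<forall>D\<in>set Ds. is_dtree E (dverts D) D) \<Longrightarrow> distinct (map dverts Ds) \<Longrightarrow>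
   dverts ` set Ds = comps E (U - {q}) \<Longrightarrow> is_dtree E U (DNode q Ds)"

fun dcost :: "('a \<Rightarrow> nat) \<Rightarrow> 'a dtree \<Rightarrow> nat" where
  "dcost w (DNode q Ds) = w q + foldr max (map (dcost w) Ds) 0"

definition OPT :: "'a set \<Rightarrow> ('a \<Rightarrow> 'a \<Rightarrow> bool) \<Rightarrow> ('a \<Rightarrow> nat) \<Rightarrow> nat" where
  "OPT V E w = (LEAST c. \<exists>D. is_dtree E V D \<and> dcost w D = c)"

text \<open>Intervals [a,b) with 0 \<le> a < b are represented as pairs (a,b) of naturals.\<close>

definition ilen :: "nat \<times> nat \<Rightarrow> nat" where
  "ilen I = snd I - fst I"

definition igt :: "nat \<times> nat \<Rightarrow> nat \<times> nat \<Rightarrow> bool" where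
  "igt I I' \<longleftrightarrow> fst I \<ge> snd I'"

definition iinter :: "nat \<times> nat \<Rightarrow> nat \<times> nat \<Rightarrow> bool" where
  "iinter I I' \<longleftrightarrow> max (fst I) (fst I') < min (snd I) (snd I')"

definition ext_strategy :: "'a set \<Rightarrow> ('a \<Rightarrow> 'a \<Rightarrow> bool) \<Rightarrow> ('a \<Rightarrow> nat) \<Rightarrow> ('a \<Rightarrow> nat \<times> nat) \<Rightarrow> bool" where
  "ext_strategy V E w f \<longleftrightarrow>
     (\<forall>v\<in>V. fst (f v) < snd (f v) \<and> ilen (f v) \<ge> w v) \<and>
     (\<forall>v1\<in>V. \<forall>v2\<in>V. v1 \<noteq> v2 \<and> iinter (f v1) (f v2) \<longrightarrow>
        (\<exists>p. is_path E v1 v2 p \<and> (\<exists>v3\<in>set p. igt (f v3) (f v1) \<and> igt (f v3) (f v2))))"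

definition sup_union :: "'a set \<Rightarrow> ('a \<Rightarrow> nat \<times> nat) \<Rightarrow> nat" where
  "sup_union V f = Max ((\<lambda>v. snd (f v)) ` V)"

end

theory Submission
  imports Defs
begin

text \<open>A decision tree D gives each vertex v, queried at the root of a subtree D_v, the interval
  [COST(D_v) - w v, COST(D_v)). These intervals are stacked disjointly along every root-to-leaf
  path of D, so two vertices with intersecting intervals lie in different child subtrees of some
  vertex r; then r lies on the tree path between them, and its interval lies above both.
  Conversely, from an extended strategy function f, query first the vertex q whose interval ends
  last: every other interval ends before f(q) starts, so recursing on the components of T - q
  (again subtrees) yields a decision tree of cost at most sup f(V). Combining both directions
  gives the formula for OPT.\<close>

definition induced :: "('a \<Rightarrow> 'a \<Rightarrow> bool) \<Rightarrow> 'a set \<Rightarrow> 'a \<Rightarrow> 'a \<Rightarrow> bool" where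
  "induced E S = (\<lambda>a b. E a b \<and> a \<in> S \<and> b \<in> S)"

lemma comps_induced: "comps E S = {C. \<exists>x\<in>S. C = {y\<in>S. (induced E S)\<^sup>*\<^sup>* x y}}"
  unfolding comps_def induced_def by simp

lemma comps_subset: "C \<in> comps E S \<Longrightarrow> C \<subseteq> S"
  unfolding comps_induced by auto

lemma Union_comps: "\<Union>(comps E S) = S"
  unfolding comps_induced by auto

lemma comps_nonempty: "C \<in> comps E S \<Longrightarrow> C \<noteq> {}"
  unfolding comps_induced by auto

lemma finite_comps: "finite S \<Longrightarrow> finite (comps E S)"
  using comps_subset by (metis PowI finite_Pow_iff finite_subset subsetI)

lemma comps_cover:
  assumes "v \<in> S"
  obtains C where "C \<in> comps E S" "v \<in> C"
  using assms Union_comps[of E S] by blast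

lemma comps_eq_reachable:
  assumes "symp E" and C: "C \<in> comps E S" and "z \<in> C"
  shows "C = {y\<in>S. (induced E S)\<^sup>*\<^sup>* z y}"
proof -
  obtain x where x: "x \<in> S" "C = {y\<in>S. (induced E S)\<^sup>*\<^sup>* x y}"
    using C unfolding comps_induced by auto
  have "symp (induced E S)\<^sup>*\<^sup>*"
    using \<open>symp E\<close> by (intro symp_rtranclp) (auto simp: induced_def symp_def)
  then have "(induced E S)\<^sup>*\<^sup>* z x"
    using x \<open>z \<in> C\<close> by (auto dest: sympD)
  then show ?thesis
    using x \<open>z \<in> C\<close> by (auto intro: rtranclp_trans)
qed

lemma comps_disjoint:
  "symp E \<Longrightarrow> C1 \<in> comps E S \<Longrightarrow> C2 \<in> comps E S \<Longrightarrow> z \<in> C1 \<Longrightarrow> z \<in> C2 \<Longrightarrow> C1 = C2"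
  using comps_eq_reachable[of E C1 S z] comps_eq_reachable[of E C2 S z] by simp

lemma is_path_nth_reachable:
  assumes p: "is_path E u v p" and "set p \<subseteq> S" and "i < length p"
  shows "(induced E S)\<^sup>*\<^sup>* u (p ! i)"
  using \<open>i < length p\<close>
proof (induction i)
  case 0
  then show ?case
    using p by (simp add: is_path_def hd_conv_nth)
next
  case (Suc i)
  then have "induced E S (p ! i) (p ! Suc i)"
    using p \<open>set p \<subseteq> S\<close> by (auto simp: is_path_def induced_def)
  then show ?case
    using Suc by (auto intro: rtranclp.rtrancl_into_rtrancl)
qed

lemma is_path_subset_comp:
  assumes "symp E" "is_path E u v p" "set p \<subseteq> S" "C \<in> comps E S" "u \<in> C"
  shows "set p \<subseteq> C"
  using assms is_path_nth_reachable[OF assms(2,3)] comps_eq_reachable[OF assms(1,4,5)]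
  by (auto simp: in_set_conv_nth)

lemma is_path_take:
  assumes p: "is_path E u v p" and "i < length p"
  shows "is_path E u (p ! i) (take (Suc i) p)"
proof -
  have "last (take (Suc i) p) = p ! i"
    using \<open>i < length p\<close> by (simp add: take_Suc_conv_app_nth)
  then show ?thesis
    using assms by (auto simp: is_path_def hd_take)
qed

lemma is_path_snoc:
  assumes p: "is_path E u v p" and "E v z" "z \<notin> set p"
  shows "is_path E u z (p @ [z])"
  unfolding is_path_def
proof (intro conjI allI impI)
  fix i assume i: "Suc i < length (p @ [z])"
  show "E ((p @ [z]) ! i) ((p @ [z]) ! Suc i)"
  proof (cases "Suc i < length p")
    case True
    then show ?thesis using p by (simp add: is_path_def nth_append)
  next
    case False
    then have "Suc i = length p"
      using i by simp
    then have "p ! i = last p"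
      using p by (metis diff_Suc_1 is_path_def last_conv_nth)
    then show ?thesis
      using p \<open>E v z\<close> \<open>Suc i = length p\<close> by (simp add: is_path_def nth_append)
  qed
qed (use p \<open>z \<notin> set p\<close> in \<open>auto simp: is_path_def\<close>)

lemma reachable_is_path:
  assumes "(induced E S)\<^sup>*\<^sup>* x y" "x \<in> S"
  shows "\<exists>p. is_path E x y p \<and> set p \<subseteq> S"
  using assms(1)
proof (induction rule: rtranclp_induct)
  case base
  then show ?case using \<open>x \<in> S\<close> by (intro exI[of _ "[x]"]) (simp add: is_path_def)
next
  case (step y z)
  obtain p where p: "is_path E x y p" "set p \<subseteq> S" using step.IH by blast
  have z: "E y z" "z \<in> S" using step.hyps(2) by (auto simp: induced_def)
  show ?case
  proof (cases "z \<in> set p")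
    case True
    then obtain i where "i < length p" "p ! i = z" by (auto simp: in_set_conv_nth)
    then show ?thesis
      using is_path_take[OF p(1)] p(2) set_take_subset by fastforce
  next
    case False
    then show ?thesis
      using is_path_snoc[OF p(1) z(1)] p(2) z(2) by (intro exI[of _ "p @ [z]"]) auto
  qed
qed

lemma is_tree_symp: "is_tree V E \<Longrightarrow> symp E"
  unfolding is_tree_def symp_def by blast

lemma is_tree_edge_vertices: "is_tree V E \<Longrightarrow> E a b \<Longrightarrow> a \<in> V \<and> b \<in> V"
  unfolding is_tree_def by blast

lemma is_tree_path_exists: "is_tree V E \<Longrightarrow> u \<in> V \<Longrightarrow> v \<in> V \<Longrightarrow> \<exists>p. is_path E u v p"
  unfolding is_tree_def by blast

lemma is_tree_path_unique:
  "is_tree V E \<Longrightarrow> u \<in> V \<Longrightarrow> v \<in> V \<Longrightarrow> is_path E u v p \<Longrightarrow> is_path E u v p' \<Longrightarrow> p = p'"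
  unfolding is_tree_def by blast

text \<open>In a tree these are the vertex sets of subtrees; both recursions below stay inside them.\<close>

definition path_closed :: "('a \<Rightarrow> 'a \<Rightarrow> bool) \<Rightarrow> 'a set \<Rightarrow> bool" where
  "path_closed E U \<longleftrightarrow> (\<forall>u\<in>U. \<forall>v\<in>U. \<forall>p. is_path E u v p \<longrightarrow> set p \<subseteq> U)"

lemma path_closed_tree:
  assumes "is_tree V E"
  shows "path_closed E V"
  unfolding path_closed_def
proof (intro ballI allI impI subsetI)
  fix u v p x assume "u \<in> V" "is_path E u v p" "x \<in> set p"
  then obtain i where i: "i < length p" "p ! i = x" by (auto simp: in_set_conv_nth)
  show "x \<in> V"
  proof (cases i)
    case 0
    then show ?thesis using i \<open>u \<in> V\<close> \<open>is_path E u v p\<close> by (simp add: is_path_def hd_conv_nth)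
  next
    case (Suc j)
    with i have "Suc j < length p" by simp
    then have "E (p ! j) (p ! Suc j)"
      using \<open>is_path E u v p\<close> unfolding is_path_def by blast
    then show ?thesis
      using i Suc is_tree_edge_vertices[OF assms] by blast
  qed
qed

lemma path_closed_comps:
  assumes T: "is_tree V E" and "U \<subseteq> V" "path_closed E U" and C: "C \<in> comps E (U - {q})"
  shows "path_closed E C"
  unfolding path_closed_def
proof (intro ballI allI impI)
  fix u v p assume u: "u \<in> C" and v: "v \<in> C" and p: "is_path E u v p"
  have uv: "u \<in> U - {q}" "v \<in> U - {q}"
    using u v comps_subset[OF C] by auto
  have "(induced E (U - {q}))\<^sup>*\<^sup>* u v"
    using comps_eq_reachable[OF is_tree_symp[OF T] C u] v by simp
  then obtain p' where p': "is_path E u v p'" "set p' \<subseteq> U - {q}"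
    using reachable_is_path[OF _ uv(1)] by blast
  have "u \<in> V" "v \<in> V"
    using uv \<open>U \<subseteq> V\<close> by auto
  then have "p = p'"
    using is_tree_path_unique[OF T _ _ p p'(1)] by simp
  then show "set p \<subseteq> C"
    using is_path_subset_comp[OF is_tree_symp[OF T] p _ C u] p'(2) by blast
qed

lemma cut_vertex_on_path:
  assumes "symp E" "path_closed E U"
    and C1: "C1 \<in> comps E (U - {q})" and C2: "C2 \<in> comps E (U - {q})" and "C1 \<noteq> C2"
    and u: "u \<in> C1" and v: "v \<in> C2" and p: "is_path E u v p"
  shows "q \<in> set p"
proof (rule ccontr)
  assume "q \<notin> set p"
  moreover have "set p \<subseteq> U"
    using \<open>path_closed E U\<close> p u v comps_subset[OF C1] comps_subset[OF C2]
    by (auto simp: path_closed_def)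
  ultimately have "set p \<subseteq> C1"
    using is_path_subset_comp[OF \<open>symp E\<close> p _ C1 u] by blast
  moreover have "v \<in> set p"
    using p by (auto simp: is_path_def)
  ultimately show False
    using comps_disjoint[OF \<open>symp E\<close> C1 C2 _ v] \<open>C1 \<noteq> C2\<close> by blast
qed

lemma iinter_commute: "iinter I J \<longleftrightarrow> iinter J I"
  by (auto simp: iinter_def)

lemma not_iinter_if_le: "snd J \<le> fst I \<Longrightarrow> \<not> iinter I J"
  by (auto simp: iinter_def)

lemma ext_strategy_intervalD:
  "ext_strategy U E w f \<Longrightarrow> v \<in> U \<Longrightarrow> fst (f v) < snd (f v) \<and> w v \<le> ilen (f v)"
  unfolding ext_strategy_def by blast

lemma ext_strategyD:
  "ext_strategy U E w f \<Longrightarrow> v1 \<in> U \<Longrightarrow> v2 \<in> U \<Longrightarrow> v1 \<noteq> v2 \<Longrightarrow> iinter (f v1) (f v2) \<Longrightarrow>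
    \<exists>p. is_path E v1 v2 p \<and> (\<exists>v3\<in>set p. igt (f v3) (f v1) \<and> igt (f v3) (f v2))"
  unfolding ext_strategy_def by blast

lemma ext_strategy_subset: "ext_strategy U E w f \<Longrightarrow> C \<subseteq> U \<Longrightarrow> ext_strategy C E w f"
  unfolding ext_strategy_def by blast

lemma ext_strategy_cong:
  assumes "path_closed E C" and fg: "\<forall>v\<in>C. f v = g v" and f: "ext_strategy C E w f"
  shows "ext_strategy C E w g"
  unfolding ext_strategy_def
proof (rule conjI; intro ballI impI)
  fix v assume "v \<in> C"
  then show "fst (g v) < snd (g v) \<and> w v \<le> ilen (g v)"
    using ext_strategy_intervalD[OF f] fg by simp
next
  fix v1 v2 assume v: "v1 \<in> C" "v2 \<in> C" and "v1 \<noteq> v2 \<and> iinter (g v1) (g v2)"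
  then have "v1 \<noteq> v2 \<and> iinter (f v1) (f v2)"
    using fg by simp
  then obtain p v3 where p: "is_path E v1 v2 p" "v3 \<in> set p" "igt (f v3) (f v1) \<and> igt (f v3) (f v2)"
    using ext_strategyD[OF f v] by blast
  moreover have "v3 \<in> C"
    using \<open>path_closed E C\<close> v p unfolding path_closed_def by blast
  ultimately show "\<exists>p. is_path E v1 v2 p \<and> (\<exists>v3\<in>set p. igt (g v3) (g v1) \<and> igt (g v3) (g v2))"
    using fg v by auto
qed

text \<open>The interval ending last cannot meet another one: a separating vertex on the path between
  them would need an interval ending even later.\<close>

lemma ext_strategy_below_top:
  assumes f: "ext_strategy U E w f" and "path_closed E U" and q: "q \<in> U"
    and top: "\<forall>u\<in>U. snd (f u) \<le> snd (f q)" and u: "u \<in> U" "u \<noteq> q"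
  shows "snd (f u) \<le> fst (f q)"
proof (rule ccontr)
  assume "\<not> snd (f u) \<le> fst (f q)"
  then have "iinter (f u) (f q)"
    using ext_strategy_intervalD[OF f u(1)] top u(1) unfolding iinter_def by auto
  then obtain p v3 where p: "is_path E u q p" "v3 \<in> set p" "igt (f v3) (f q)"
    using ext_strategyD[OF f u(1) q u(2)] by blast
  moreover have "v3 \<in> U"
    using \<open>path_closed E U\<close> u q p unfolding path_closed_def by blast
  ultimately show False
    using ext_strategy_intervalD[OF f] top unfolding igt_def by fastforce
qed

lemma ext_strategy_extend:
  assumes T: "is_tree V E" and "U \<subseteq> V" "path_closed E U" and "q \<in> U"
    and fq: "fst (f q) < snd (f q)" "w q \<le> ilen (f q)"
    and below: "\<forall>u\<in>U - {q}. snd (f u) \<le> fst (f q)"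
    and comps: "\<forall>C\<in>comps E (U - {q}). ext_strategy C E w f"
  shows "ext_strategy U E w f"
  unfolding ext_strategy_def
proof (rule conjI; intro ballI impI)
  fix v assume "v \<in> U"
  show "fst (f v) < snd (f v) \<and> w v \<le> ilen (f v)"
  proof (cases "v = q")
    case True
    with fq show ?thesis by simp
  next
    case False
    with \<open>v \<in> U\<close> have "v \<in> U - {q}"
      by simp
    then obtain C where "C \<in> comps E (U - {q})" "v \<in> C"
      by (rule comps_cover)
    with comps show ?thesis
      using ext_strategy_intervalD[of C E w f v] by blast
  qed
next
  fix v1 v2 assume v: "v1 \<in> U" "v2 \<in> U" and i: "v1 \<noteq> v2 \<and> iinter (f v1) (f v2)"
  have "v1 \<noteq> q"
  proof
    assume "v1 = q"
    with i v below have "snd (f v2) \<le> fst (f v1)" by auto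
    with i show False using not_iinter_if_le by blast
  qed
  have "v2 \<noteq> q"
  proof
    assume "v2 = q"
    with i v below have "snd (f v1) \<le> fst (f v2)" by auto
    with i show False using not_iinter_if_le iinter_commute by blast
  qed
  with v \<open>v1 \<noteq> q\<close> have "v1 \<in> U - {q}" "v2 \<in> U - {q}"
    by simp_all
  then obtain C1 C2 where C: "C1 \<in> comps E (U - {q})" "v1 \<in> C1" "C2 \<in> comps E (U - {q})" "v2 \<in> C2"
    by (meson comps_cover)
  show "\<exists>p. is_path E v1 v2 p \<and> (\<exists>v3\<in>set p. igt (f v3) (f v1) \<and> igt (f v3) (f v2))"
  proof (cases "C1 = C2")
    case True
    with C have "v2 \<in> C1"
      by simp
    with C(1,2) comps i show ?thesis
      using ext_strategyD[of C1 E w f v1 v2] by blast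
  next
    case False
    obtain p where p: "is_path E v1 v2 p"
      using is_tree_path_exists[OF T] v \<open>U \<subseteq> V\<close> by blast
    then have "q \<in> set p"
      using cut_vertex_on_path[OF is_tree_symp[OF T] \<open>path_closed E U\<close> C(1,3) False C(2,4)] by blast
    moreover have "igt (f q) (f v1)" "igt (f q) (f v2)"
      using below v \<open>v1 \<noteq> q\<close> \<open>v2 \<noteq> q\<close> unfolding igt_def by auto
    ultimately show ?thesis
      using p by blast
  qed
qed

lemma sup_union_attained:
  assumes "finite U" "U \<noteq> {}"
  obtains q where "q \<in> U" "snd (f q) = sup_union U f" "\<forall>u\<in>U. snd (f u) \<le> snd (f q)"
proof -
  have "sup_union U f \<in> (\<lambda>v. snd (f v)) ` U"
    unfolding sup_union_def using assms by (intro Max_in) auto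
  then obtain q where "q \<in> U" "snd (f q) = sup_union U f"
    by auto
  with that show thesis
    using \<open>finite U\<close> unfolding sup_union_def by simp
qed

lemma foldr_max_le_iff: "foldr max xs (0::nat) \<le> c \<longleftrightarrow> (\<forall>x\<in>set xs. x \<le> c)"
  by (induction xs) simp_all

lemma dcost_child_le: "D \<in> set Ds \<Longrightarrow> dcost w D \<le> foldr max (map (dcost w) Ds) 0"
  using foldr_max_le_iff[of "map (dcost w) Ds" "foldr max (map (dcost w) Ds) 0"] by simp

lemma is_dtree_dverts: "is_dtree E U D \<Longrightarrow> dverts D = U"
proof (induction rule: is_dtree.induct)
  case (1 q U Ds)
  have "(\<Union>D\<in>set Ds. dverts D) = U - {q}"
    unfolding \<open>dverts ` set Ds = comps E (U - {q})\<close> by (rule Union_comps)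
  with \<open>q \<in> U\<close> show ?case by auto
qed

lemma is_dtree_DNodeI:
  assumes "finite U" "q \<in> U" and g: "\<forall>C\<in>comps E (U - {q}). is_dtree E C (g C)"
  obtains Ds where "is_dtree E U (DNode q Ds)" "set Ds = g ` comps E (U - {q})"
proof -
  have "finite (comps E (U - {q}))"
    using \<open>finite U\<close> by (simp add: finite_comps)
  then obtain Cs where Cs: "set Cs = comps E (U - {q})" "distinct Cs"
    using finite_distinct_list by blast
  have dverts_g: "dverts (g C) = C" if "C \<in> comps E (U - {q})" for C
    using g that is_dtree_dverts by blast
  then have map_dverts: "map dverts (map g Cs) = Cs"
    using Cs(1) unfolding map_map by (intro map_idI) auto
  have "is_dtree E U (DNode q (map g Cs))"
  proof (rule is_dtree.intros)
    show "\<forall>D\<in>set (map g Cs). is_dtree E (dverts D) D"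
      using g dverts_g Cs(1) by simp
    show "dverts ` set (map g Cs) = comps E (U - {q})"
      using map_dverts Cs(1) by (metis set_map)
  qed (use \<open>q \<in> U\<close> map_dverts Cs(2) in simp_all)
  then show thesis
    using that Cs(1) by simp
qed

lemma is_dtree_exists: "finite U \<Longrightarrow> U \<noteq> {} \<Longrightarrow> \<exists>D. is_dtree E U D"
proof (induction "card U" arbitrary: U rule: less_induct)
  case less
  then obtain q where "q \<in> U" by blast
  have "\<exists>D. is_dtree E C D" if C: "C \<in> comps E (U - {q})" for C
  proof -
    have "C \<subset> U"
      using comps_subset[OF C] \<open>q \<in> U\<close> by blast
    moreover have "finite C"
      using \<open>C \<subset> U\<close> less.prems(1) finite_subset by blast
    ultimately show ?thesis
      using less.hyps less.prems(1) comps_nonempty[OF C] psubset_card_mono by blast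
  qed
  then obtain g where "\<forall>C\<in>comps E (U - {q}). is_dtree E C (g C)"
    by metis
  then show ?case
    using is_dtree_DNodeI[OF less.prems(1) \<open>q \<in> U\<close>] by metis
qed

text \<open>The root q of a subtree D gets the interval [COST(D) - w q, COST(D)), i.e. it starts where the
  costliest child subtree ends.\<close>

fun dtree_strategy :: "('a \<Rightarrow> nat) \<Rightarrow> 'a dtree \<Rightarrow> 'a \<Rightarrow> nat \<times> nat"
  and forest_strategy :: "('a \<Rightarrow> nat) \<Rightarrow> 'a dtree list \<Rightarrow> 'a \<Rightarrow> nat \<times> nat" where
  "dtree_strategy w (DNode q Ds) v =
     (if v = q then (foldr max (map (dcost w) Ds) 0, dcost w (DNode q Ds)) else forest_strategy w Ds v)"
| "forest_strategy w [] v = (0, 0)"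
| "forest_strategy w (D # Ds) v = (if v \<in> dverts D then dtree_strategy w D v else forest_strategy w Ds v)"

lemma forest_strategy_in_child:
  "v \<in> (\<Union>D\<in>set Ds. dverts D) \<Longrightarrow> \<exists>D\<in>set Ds. v \<in> dverts D \<and> forest_strategy w Ds v = dtree_strategy w D v"
  by (induction Ds) auto

lemma dtree_strategy_interval:
  "v \<in> dverts D \<Longrightarrow> ilen (dtree_strategy w D v) = w v \<and> snd (dtree_strategy w D v) \<le> dcost w D"
proof (induction D)
  case (DNode q Ds)
  show ?case
  proof (cases "v = q")
    case True
    then show ?thesis by (simp add: ilen_def)
  next
    case False
    with DNode.prems obtain D where D: "D \<in> set Ds" "v \<in> dverts D"
      and eq: "dtree_strategy w (DNode q Ds) v = dtree_strategy w D v"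
      using forest_strategy_in_child[of v Ds w] by auto
    then show ?thesis
      using DNode.IH[OF D] dcost_child_le[OF D(1), of w] by simp
  qed
qed

lemma dtree_strategy_child:
  assumes D: "is_dtree E U (DNode q Ds)" and "symp E" and "D \<in> set Ds" "v \<in> dverts D"
  shows "dtree_strategy w (DNode q Ds) v = dtree_strategy w D v"
proof -
  from D have comps: "dverts ` set Ds = comps E (U - {q})" and "inj_on dverts (set Ds)"
    by (auto elim: is_dtree.cases simp: distinct_map)
  then have C: "dverts D \<in> comps E (U - {q})"
    using \<open>D \<in> set Ds\<close> by blast
  then have "v \<noteq> q"
    using comps_subset \<open>v \<in> dverts D\<close> by fastforce
  obtain D' where D': "D' \<in> set Ds" "v \<in> dverts D'"
    and eq: "forest_strategy w Ds v = dtree_strategy w D' v"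
    using forest_strategy_in_child[of v Ds w] \<open>D \<in> set Ds\<close> \<open>v \<in> dverts D\<close> by blast
  have "dverts D' \<in> comps E (U - {q})"
    using comps D'(1) by blast
  then have "dverts D' = dverts D"
    using comps_disjoint[OF \<open>symp E\<close> _ C D'(2) \<open>v \<in> dverts D\<close>] by blast
  with \<open>inj_on dverts (set Ds)\<close> have "D' = D"
    using D'(1) \<open>D \<in> set Ds\<close> by (rule inj_onD)
  with \<open>v \<noteq> q\<close> eq show ?thesis
    by simp
qed

lemma ext_strategy_dtree_strategy:
  assumes T: "is_tree V E" and pos: "\<forall>v\<in>V. 0 < w v"
  shows "is_dtree E U D \<Longrightarrow> U \<subseteq> V \<Longrightarrow> path_closed E U \<Longrightarrow> ext_strategy U E w (dtree_strategy w D)"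
proof (induction rule: is_dtree.induct)
  case (1 q U Ds)
  let ?f = "dtree_strategy w (DNode q Ds)"
  note q = \<open>q \<in> U\<close> and UV = \<open>U \<subseteq> V\<close> and closed = \<open>path_closed E U\<close>
    and children = \<open>dverts ` set Ds = comps E (U - {q})\<close>
  have D: "is_dtree E U (DNode q Ds)"
    using 1 by (intro is_dtree.intros) blast+
  have IH: "ext_strategy (dverts D) E w (dtree_strategy w D)"
    if "D \<in> set Ds" "dverts D \<subseteq> V" "path_closed E (dverts D)" for D
    using 1 that by blast
  have child: "\<exists>D\<in>set Ds. C = dverts D" if "C \<in> comps E (U - {q})" for C
    using that children by blast
  have "\<forall>C\<in>comps E (U - {q}). ext_strategy C E w ?f"
  proof
    fix C assume C: "C \<in> comps E (U - {q})"
    then obtain D where "D \<in> set Ds" "C = dverts D"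
      using child by blast
    moreover have "C \<subseteq> V" "path_closed E C"
      using comps_subset[OF C] path_closed_comps[OF T UV closed C] UV by auto
    ultimately have "ext_strategy C E w (dtree_strategy w D)"
      using IH by blast
    then show "ext_strategy C E w ?f"
      using ext_strategy_cong[OF \<open>path_closed E C\<close>] dtree_strategy_child[OF D is_tree_symp[OF T]]
        \<open>D \<in> set Ds\<close> \<open>C = dverts D\<close> by metis
  qed
  moreover have "\<forall>u\<in>U - {q}. snd (?f u) \<le> fst (?f q)"
  proof
    fix u assume "u \<in> U - {q}"
    then obtain C where "C \<in> comps E (U - {q})" "u \<in> C"
      by (rule comps_cover)
    then obtain D where D': "D \<in> set Ds" "u \<in> dverts D"
      using child by blast
    then have "snd (?f u) = snd (dtree_strategy w D u)"
      using dtree_strategy_child[OF D is_tree_symp[OF T]] by simp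
    also have "\<dots> \<le> dcost w D"
      using dtree_strategy_interval[OF D'(2)] by simp
    also have "\<dots> \<le> fst (?f q)"
      using dcost_child_le[OF D'(1), of w] by simp
    finally show "snd (?f u) \<le> fst (?f q)" .
  qed
  moreover have "0 < w q"
    using pos q UV by blast
  then have "fst (?f q) < snd (?f q)" "w q \<le> ilen (?f q)"
    by (simp_all add: ilen_def)
  ultimately show ?case
    using ext_strategy_extend[OF T UV closed q] by blast
qed

lemma sup_union_dtree_strategy:
  assumes "finite U" and D: "is_dtree E U D"
  shows "sup_union U (dtree_strategy w D) = dcost w D"
  unfolding sup_union_def
proof (rule Max_eqI)
  show "finite ((\<lambda>v. snd (dtree_strategy w D v)) ` U)"
    using \<open>finite U\<close> by simp
next
  fix y assume "y \<in> (\<lambda>v. snd (dtree_strategy w D v)) ` U"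
  then obtain v where "v \<in> dverts D" "y = snd (dtree_strategy w D v)"
    using is_dtree_dverts[OF D] by blast
  then show "y \<le> dcost w D"
    using dtree_strategy_interval[of v D w] by simp
next
  obtain q Ds where "D = DNode q Ds" "q \<in> U"
    using D by (cases rule: is_dtree.cases) blast
  then show "dcost w D \<in> (\<lambda>v. snd (dtree_strategy w D v)) ` U"
    by (simp add: rev_image_eqI)
qed

lemma dtree_of_ext_strategy:
  assumes T: "is_tree V E"
  shows "U \<subseteq> V \<Longrightarrow> path_closed E U \<Longrightarrow> U \<noteq> {} \<Longrightarrow> ext_strategy U E w f \<Longrightarrow>
    \<exists>D. is_dtree E U D \<and> dcost w D \<le> sup_union U f"
proof (induction "card U" arbitrary: U rule: less_induct)
  case less
  have "finite U"
    using T less.prems(1) finite_subset unfolding is_tree_def by blast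
  then obtain q where q: "q \<in> U" "snd (f q) = sup_union U f" and top: "\<forall>u\<in>U. snd (f u) \<le> snd (f q)"
    using sup_union_attained less.prems(3) by blast
  have below: "sup_union C f \<le> fst (f q)" if C: "C \<in> comps E (U - {q})" for C
  proof -
    have "finite C" "C \<noteq> {}" "C \<subseteq> U - {q}"
      using comps_subset[OF C] comps_nonempty[OF C] \<open>finite U\<close> finite_subset by blast+
    then show ?thesis
      using ext_strategy_below_top[OF less.prems(4,2) q(1) top] unfolding sup_union_def by auto
  qed
  have "\<exists>D. is_dtree E C D \<and> dcost w D \<le> sup_union C f" if C: "C \<in> comps E (U - {q})" for C
  proof -
    have "C \<subset> U" "C \<subseteq> V"
      using comps_subset[OF C] q(1) less.prems(1) by blast+
    moreover have "path_closed E C"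
      using path_closed_comps[OF T less.prems(1,2) C] .
    ultimately show ?thesis
      using less.hyps[OF psubset_card_mono[OF \<open>finite U\<close>]] comps_nonempty[OF C]
        ext_strategy_subset[OF less.prems(4)] by blast
  qed
  then obtain g where g: "\<forall>C\<in>comps E (U - {q}). is_dtree E C (g C) \<and> dcost w (g C) \<le> sup_union C f"
    by metis
  then obtain Ds where Ds: "is_dtree E U (DNode q Ds)" "set Ds = g ` comps E (U - {q})"
    using is_dtree_DNodeI[OF \<open>finite U\<close> q(1), of E g] by blast
  have "foldr max (map (dcost w) Ds) 0 \<le> fst (f q)"
    unfolding foldr_max_le_iff using Ds(2) g below by fastforce
  moreover have "w q \<le> snd (f q) - fst (f q)" "fst (f q) < snd (f q)"
    using ext_strategy_intervalD[OF less.prems(4) q(1)] unfolding ilen_def by auto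
  ultimately have "dcost w (DNode q Ds) \<le> sup_union U f"
    using q(2) by simp
  with Ds(1) show ?case
    by blast
qed

lemma OPT_le_dcost:
  assumes "is_dtree E V D"
  shows "OPT V E w \<le> dcost w D"
  unfolding OPT_def by (rule Least_le) (use assms in blast)

lemma OPT_attained:
  assumes "finite V" "V \<noteq> {}"
  obtains D where "is_dtree E V D" "dcost w D = OPT V E w"
proof -
  have "\<exists>c D. is_dtree E V D \<and> dcost w D = c"
    using is_dtree_exists[OF assms] by blast
  then have "\<exists>D. is_dtree E V D \<and> dcost w D = OPT V E w"
    unfolding OPT_def by (rule LeastI_ex)
  with that show thesis
    by blast
qed

theorem mainTheorem10:
  fixes V :: "'a set" and E :: "'a \<Rightarrow> 'a \<Rightarrow> bool" and w :: "'a \<Rightarrow> nat"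
  assumes "is_tree V E"
    and "\<forall>v\<in>V. w v > 0"
  shows "(\<forall>D. is_dtree E V D \<longrightarrow> (\<exists>f. ext_strategy V E w f \<and> sup_union V f = dcost w D))
       \<and> (\<forall>f. ext_strategy V E w f \<longrightarrow> (\<exists>D. is_dtree E V D \<and> dcost w D \<le> sup_union V f))
       \<and> (\<exists>f. ext_strategy V E w f \<and> sup_union V f = OPT V E w)
       \<and> (\<forall>f. ext_strategy V E w f \<longrightarrow> OPT V E w \<le> sup_union V f)"
proof -
  have V: "finite V" "V \<noteq> {}"
    using \<open>is_tree V E\<close> unfolding is_tree_def by blast+
  have closed: "path_closed E V"
    using \<open>is_tree V E\<close> by (rule path_closed_tree)
  have strategy: "\<exists>f. ext_strategy V E w f \<and> sup_union V f = dcost w D" if "is_dtree E V D" for D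
    using ext_strategy_dtree_strategy[OF assms that order_refl closed]
      sup_union_dtree_strategy[OF V(1) that] by blast
  have dtree: "\<exists>D. is_dtree E V D \<and> dcost w D \<le> sup_union V f" if "ext_strategy V E w f" for f
    using dtree_of_ext_strategy[OF \<open>is_tree V E\<close> order_refl closed V(2) that] .
  moreover have "\<exists>f. ext_strategy V E w f \<and> sup_union V f = OPT V E w"
  proof -
    obtain D where "is_dtree E V D" "dcost w D = OPT V E w"
      using OPT_attained[OF V] .
    with strategy show ?thesis
      by metis
  qed
  moreover have "OPT V E w \<le> sup_union V f" if f: "ext_strategy V E w f" for f
  proof -
    obtain D where "is_dtree E V D" "dcost w D \<le> sup_union V f"
      using dtree[OF f] by blast
    then show ?thesis
      using OPT_le_dcost[of E V D w] by linarith
  qed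
  ultimately show ?thesis
    using strategy dtree by blast
qed

end
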